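(* Let $A$ be a finite alphabet. Every sequence $(w_n)_{n\ge0}$ of words over $A$ admits an adequate subsequence.
   Context: For $B\subseteq A$, let $B^{=}=\{w\in B^*:\mathrm{alph}(w)=B\}$ (words whose set of letters is exactly $B$). A factorization pattern is $(\vec u,\vec B)$ with $\vec u=(u_0,\dots,u_p)\in(A^* )^{p+1}$ and $\vec B=(B_1,\dots,B_p)$ nonempty subsets of $A$, $p\ge0$. For $n\ge0$ let $L_n(\vec u,\vec B)=u_0(B_1^{=})^nu_1(B_2^{=})^nu_2\cdots u_{p-1}(B_p^{=})^nu_p$. A sequence $(w_n)_n$ is $(\vec u,\vec B)$-adequate if $w_n\in L_n(\vec u,\vec B)$ for all $n\ge0$, and adequate if it is $(\vec u,\vec B)$-adequate for some factorization pattern $(\vec u,\vec B)$. *)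

theory Defs
  imports Main
begin

definition exact_alph :: "'a set \<Rightarrow> 'a list set" where
  "exact_alph B = {w. set w = B}"

fun lang_pow :: "'a list set \<Rightarrow> nat \<Rightarrow> 'a list set" where
  "lang_pow L 0 = {[]}"
| "lang_pow L (Suc n) = {x @ y | x y. x \<in> L \<and> y \<in> lang_pow L n}"

(* L_n(us,Bs) = u_0 (B_1^=)^n u_1 ... (B_p^=)^n u_p,
   where us = [u_0,...,u_p] and Bs = [B_1,...,B_p] *)
fun L_pat :: "'a list list \<Rightarrow> 'a set list \<Rightarrow> nat \<Rightarrow> 'a list set" where
  "L_pat [u] [] n = {u}"
| "L_pat (u # us) (B # Bs) n =
     {u @ x @ y | x y. x \<in> lang_pow (exact_alph B) n \<and> y \<in> L_pat us Bs n}"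
| "L_pat _ _ n = {}"

definition fact_pattern :: "'a set \<Rightarrow> 'a list list \<Rightarrow> 'a set list \<Rightarrow> bool" where
  "fact_pattern A us Bs \<longleftrightarrow> length us = Suc (length Bs)
     \<and> (\<forall>u\<in>set us. set u \<subseteq> A)
     \<and> (\<forall>B\<in>set Bs. B \<noteq> {} \<and> B \<subseteq> A)"

definition adequate_for :: "'a list list \<Rightarrow> 'a set list \<Rightarrow> (nat \<Rightarrow> 'a list) \<Rightarrow> bool" where
  "adequate_for us Bs w \<longleftrightarrow> (\<forall>n. w n \<in> L_pat us Bs n)"

definition adequate :: "'a set \<Rightarrow> (nat \<Rightarrow> 'a list) \<Rightarrow> bool" where
  "adequate A w \<longleftrightarrow> (\<exists>us Bs. fact_pattern A us Bs \<and> adequate_for us Bs w)"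

end

theory Submission
  imports Defs "HOL-Library.Infinite_Set" "HOL.Topological_Spaces"
begin

text \<open>The proof is an induction on the number \<open>k\<close> of letters, for finite families of sequences,
  each of which must become adequate along one common subsequence. Adequacy is preserved by
  concatenation and by subsequences that keep the index \<open>0\<close>.

  Along a subsequence every word of a sequence has the same alphabet \<open>C\<close>. If \<open>|C| = k + 1\<close>,
  cut each word into blocks \<open>z a\<close> with alphabet exactly \<open>C\<close>, followed by a rest; \<open>z\<close> and the
  rest have at most \<open>k\<close> letters. Along a further subsequence, either the number of blocks grows
  at least linearly, and then the \<open>n\<close>-th word lies in \<open>(C\<^sup>=)\<^sup>n y\<^sub>1 (C\<^sup>=)\<^sup>n \<dots> y\<^sub>l (C\<^sup>=)\<^sup>n\<close>
  where \<open>y\<close> is the first word, or the word of separating letters \<open>a\<close> is constant, and then the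
  sequence is a concatenation of piece sequences and constant letters, which the induction
  hypothesis makes adequate together with the rest of the family.\<close>

section \<open>Powers of exact-alphabet languages\<close>

lemma exact_alph_iff [simp]: "w \<in> exact_alph B \<longleftrightarrow> set w = B"
  by (simp add: exact_alph_def)

lemma lang_pow_SucI: "x \<in> L \<Longrightarrow> y \<in> lang_pow L n \<Longrightarrow> x @ y \<in> lang_pow L (Suc n)"
  by auto

lemma lang_pow_SucE:
  assumes "w \<in> lang_pow L (Suc n)"
  obtains x y where "w = x @ y" "x \<in> L" "y \<in> lang_pow L n"
  using assms by auto

text \<open>Unfolding the set comprehension of \<open>lang_pow L (Suc n)\<close> makes simp and auto blow up;
  the two rules above are used instead.\<close>
declare lang_pow.simps(2) [simp del]

lemma set_lang_pow_exact_alph: "w \<in> lang_pow (exact_alph C) (Suc n) \<Longrightarrow> set w = C"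
proof (induction n arbitrary: w)
  case 0
  then show ?case
    by (auto elim: lang_pow_SucE)
next
  case (Suc n)
  then obtain x y where "w = x @ y" "set x = C" "y \<in> lang_pow (exact_alph C) (Suc n)"
    by (auto elim: lang_pow_SucE)
  with Suc.IH show ?case
    by auto
qed

lemma lang_pow_add_split:
  "w \<in> lang_pow L (m + n) \<Longrightarrow> \<exists>x y. w = x @ y \<and> x \<in> lang_pow L m \<and> y \<in> lang_pow L n"
proof (induction m arbitrary: w)
  case (Suc m)
  then obtain u v where "w = u @ v" "u \<in> L" "v \<in> lang_pow L (m + n)"
    by (auto elim: lang_pow_SucE)
  with Suc.IH[of v] lang_pow_SucI[of u L] show ?case
    by (metis append.assoc)
qed force

lemma lang_pow_exact_alph_append_right:
  "w \<in> lang_pow (exact_alph C) (Suc n) \<Longrightarrow> set v \<subseteq> C \<Longrightarrow> w @ v \<in> lang_pow (exact_alph C) (Suc n)"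
proof (induction n arbitrary: w)
  case (Suc n)
  then obtain u u' where "w = u @ u'" "set u = C" "u' \<in> lang_pow (exact_alph C) (Suc n)"
    by (auto elim: lang_pow_SucE)
  with Suc.IH[of u'] Suc.prems(2) show ?case
    using lang_pow_SucI[of u "exact_alph C" "u' @ v" "Suc n"] by simp
next
  case 0
  then obtain u where "w = u" "set u = C"
    by (auto elim: lang_pow_SucE)
  with 0 show ?case
    using lang_pow_SucI[of "u @ v" "exact_alph C" "[]" 0] by auto
qed

lemma lang_pow_exact_alph_append_left:
  assumes "w \<in> lang_pow (exact_alph C) (Suc n)" "set v \<subseteq> C"
  shows "v @ w \<in> lang_pow (exact_alph C) (Suc n)"
proof -
  obtain u u' where "w = u @ u'" "set u = C" "u' \<in> lang_pow (exact_alph C) n"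
    using assms(1) by (auto elim: lang_pow_SucE)
  with assms(2) show ?thesis
    using lang_pow_SucI[of "v @ u" "exact_alph C" u'] by auto
qed

lemma lang_pow_exact_alph_antimono:
  assumes "w \<in> lang_pow (exact_alph C) n" "0 < m" "m \<le> n"
  shows "w \<in> lang_pow (exact_alph C) m"
proof -
  have "n = Suc (n - m) + (m - 1)"
    using assms by simp
  then obtain x y where "w = x @ y" "x \<in> lang_pow (exact_alph C) (Suc (n - m))"
    "y \<in> lang_pow (exact_alph C) (m - 1)"
    using lang_pow_add_split assms(1) by metis
  moreover have "Suc (m - 1) = m"
    using assms(2) by simp
  ultimately show ?thesis
    using set_lang_pow_exact_alph lang_pow_SucI[of x "exact_alph C" y "m - 1"] by fastforce
qed

lemma concat_append_mem_lang_pow_exact_alph: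
  assumes "ws \<noteq> []" "\<forall>v\<in>set ws. set v = C" "set r \<subseteq> C"
  shows "concat ws @ r \<in> lang_pow (exact_alph C) (length ws)"
  using assms
proof (induction ws)
  case (Cons v ws)
  show ?case
  proof (cases "ws = []")
    case True
    with Cons.prems show ?thesis
      using lang_pow_SucI[of "v @ r" "exact_alph C" "[]" 0] by auto
  next
    case False
    with Cons show ?thesis
      using lang_pow_SucI[of v "exact_alph C" "concat ws @ r"] by simp
  qed
qed simp

section \<open>Factorization patterns\<close>

lemma length_eq_if_mem_L_pat: "x \<in> L_pat us Bs n \<Longrightarrow> length us = Suc (length Bs)"
  by (induction us Bs n arbitrary: x rule: L_pat.induct) auto

lemma L_pat_0: "length us = Suc (length Bs) \<Longrightarrow> L_pat us Bs 0 = {concat us}"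
  by (induction us Bs "0::nat" rule: L_pat.induct) auto

lemma L_pat_ConsI:
  "x \<in> lang_pow (exact_alph B) n \<Longrightarrow> y \<in> L_pat us Bs n \<Longrightarrow> u @ x @ y \<in> L_pat (u # us) (B # Bs) n"
  by auto

lemma L_pat_antimono: "x \<in> L_pat us Bs n \<Longrightarrow> 0 < m \<Longrightarrow> m \<le> n \<Longrightarrow> x \<in> L_pat us Bs m"
proof (induction us Bs n arbitrary: x rule: L_pat.induct)
  case (2 u us B Bs n)
  then obtain y z where "x = u @ y @ z" "y \<in> lang_pow (exact_alph B) n" "z \<in> L_pat us Bs n"
    by auto
  moreover from \<open>y \<in> lang_pow (exact_alph B) n\<close> have "y \<in> lang_pow (exact_alph B) m"
    using "2.prems"(2,3) by (rule lang_pow_exact_alph_antimono)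
  moreover from \<open>z \<in> L_pat us Bs n\<close> have "z \<in> L_pat us Bs m"
    using "2.prems"(2,3) by (rule "2.IH")
  ultimately show ?case
    by (simp only: L_pat_ConsI)
qed auto

lemma L_pat_Cons_append: "y \<in> L_pat (v # vs) Ds n \<Longrightarrow> u @ y \<in> L_pat ((u @ v) # vs) Ds n"
  by (cases vs; cases Ds) auto

definition pattern_append :: "'a list list \<Rightarrow> 'a list list \<Rightarrow> 'a list list" where
  "pattern_append us vs = butlast us @ [last us @ hd vs] @ tl vs"

lemma L_pat_append:
  "x \<in> L_pat us Bs n \<Longrightarrow> y \<in> L_pat vs Ds n \<Longrightarrow> x @ y \<in> L_pat (pattern_append us vs) (Bs @ Ds) n"
proof (induction us Bs n arbitrary: x rule: L_pat.induct)
  case (1 u n)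
  obtain v vs' where "vs = v # vs'"
    using length_eq_if_mem_L_pat[OF 1(2)] by (cases vs) auto
  with 1 show ?case
    using L_pat_Cons_append[of y v vs' Ds n u] by (simp add: pattern_append_def)
next
  case (2 u us B Bs n)
  then obtain y' z where "x = u @ y' @ z" "y' \<in> lang_pow (exact_alph B) n" "z \<in> L_pat us Bs n"
    by auto
  moreover have "us \<noteq> []"
    using length_eq_if_mem_L_pat[OF \<open>z \<in> L_pat us Bs n\<close>] by auto
  then have "pattern_append (u # us) vs = u # pattern_append us vs"
    by (simp add: pattern_append_def)
  moreover have "z @ y \<in> L_pat (pattern_append us vs) (Bs @ Ds) n"
    using \<open>z \<in> L_pat us Bs n\<close> "2.prems"(2) by (rule "2.IH")
  ultimately show ?case
    using L_pat_ConsI[of y' B n "z @ y" "pattern_append us vs" "Bs @ Ds" u] by simp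
qed auto

text \<open>With \<open>C\<close> as every block alphabet, this pattern describes
  \<open>(C\<^sup>=)\<^sup>n y\<^sub>1 (C\<^sup>=)\<^sup>n y\<^sub>2 \<dots> y\<^sub>l (C\<^sup>=)\<^sup>n\<close>, whose instance at \<open>n = 0\<close> is \<open>y\<close>.\<close>
definition letters_pattern :: "'a list \<Rightarrow> 'a list list" where
  "letters_pattern y = [] # map (\<lambda>a. [a]) y @ [[]]"

lemma concat_letters_pattern: "concat (letters_pattern y) = y"
  by (induction y) (auto simp: letters_pattern_def)

lemma lang_pow_exact_alph_split_letter:
  assumes "w \<in> lang_pow (exact_alph C) (m + Suc n)" "a \<in> C" "0 < m" "0 < n"
  shows "\<exists>x z. w = x @ a # z \<and> x \<in> lang_pow (exact_alph C) m \<and> z \<in> lang_pow (exact_alph C) n"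
proof -
  obtain x w1 where "w = x @ w1" "x \<in> lang_pow (exact_alph C) m" "w1 \<in> lang_pow (exact_alph C) (Suc n)"
    using lang_pow_add_split assms(1) by metis
  moreover from this(3) obtain v w2 where "w1 = v @ w2" "set v = C" "w2 \<in> lang_pow (exact_alph C) n"
    by (auto elim: lang_pow_SucE)
  moreover from this(2) obtain p q where "v = p @ a # q"
    using assms(2) split_list by metis
  moreover have "x @ p \<in> lang_pow (exact_alph C) m"
    using lang_pow_exact_alph_append_right[of x C "m - 1" p] calculation assms(3) by auto
  moreover have "q @ w2 \<in> lang_pow (exact_alph C) n"
    using lang_pow_exact_alph_append_left[of w2 C "n - 1" q] calculation assms(4) by auto
  ultimately show ?thesis
    by (intro exI[of _ "x @ p"] exI[of _ "q @ w2"]) simp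
qed

lemma mem_L_pat_letters_pattern:
  assumes "0 < m" "set y \<subseteq> C" "w \<in> lang_pow (exact_alph C) N" "(length y + 1) * (m + 1) \<le> N"
  shows "w \<in> L_pat (letters_pattern y) (replicate (length y + 1) C) m"
  using assms(2-4)
proof (induction y arbitrary: w N)
  case Nil
  then show ?case
    using lang_pow_exact_alph_antimono assms(1) by (fastforce simp: letters_pattern_def)
next
  case (Cons a y)
  define N' where "N' = N - m - 1"
  have N': "(length y + 1) * (m + 1) \<le> N'" "N = m + Suc N'"
    using Cons.prems(3) by (simp_all add: N'_def)
  then obtain x z where "w = x @ a # z" and x: "x \<in> lang_pow (exact_alph C) m"
    and z: "z \<in> lang_pow (exact_alph C) N'"
    using lang_pow_exact_alph_split_letter[of w C m N' a] Cons.prems assms(1) by auto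
  from z have "z \<in> L_pat (letters_pattern y) (replicate (length y + 1) C) m"
    using Cons.IH N' Cons.prems(1) by simp
  then have "[a] @ z \<in> L_pat ([a] # map (\<lambda>a. [a]) y @ [[]]) (replicate (length y + 1) C) m"
    using L_pat_Cons_append[of z "[]" "map (\<lambda>a. [a]) y @ [[]]" _ m "[a]"]
    by (simp add: letters_pattern_def)
  then have "[] @ x @ ([a] @ z)
      \<in> L_pat ([] # [a] # map (\<lambda>a. [a]) y @ [[]]) (C # replicate (length y + 1) C) m"
    using x by (intro L_pat_ConsI)
  moreover have "letters_pattern (a # y) = [] # [a] # map (\<lambda>a. [a]) y @ [[]]"
    "replicate (length (a # y) + 1) C = C # replicate (length y + 1) C"
    by (simp_all add: letters_pattern_def)
  ultimately show ?case
    using \<open>w = x @ a # z\<close> by simp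
qed

section \<open>Adequate sequences\<close>

lemma fact_pattern_pattern_append:
  assumes "fact_pattern A us Bs" "fact_pattern A vs Ds"
  shows "fact_pattern A (pattern_append us vs) (Bs @ Ds)"
proof -
  have "us \<noteq> []" "vs \<noteq> []"
    using assms by (auto simp: fact_pattern_def)
  have "set u \<subseteq> A" if "u \<in> set (pattern_append us vs)" for u
  proof -
    from that consider "u \<in> set us" | "u \<in> set vs" | "u = last us @ hd vs"
      using \<open>vs \<noteq> []\<close> by (auto simp: pattern_append_def dest: in_set_butlastD list.set_sel(2))
    then show ?thesis
      using assms \<open>us \<noteq> []\<close> \<open>vs \<noteq> []\<close> by cases (auto simp: fact_pattern_def)
  qed
  moreover have "length (pattern_append us vs) = Suc (length (Bs @ Ds))"
    using assms \<open>us \<noteq> []\<close> \<open>vs \<noteq> []\<close> by (simp add: fact_pattern_def pattern_append_def)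
  ultimately show ?thesis
    using assms unfolding fact_pattern_def by auto
qed

lemma adequate_const: "set u \<subseteq> A \<Longrightarrow> adequate A (\<lambda>n. u)"
  unfolding adequate_def adequate_for_def fact_pattern_def
  by (intro exI[of _ "[u]"] exI[of _ "[]"]) simp

lemma adequate_append:
  assumes "adequate A x" "adequate A y"
  shows "adequate A (\<lambda>n. x n @ y n)"
proof -
  obtain us Bs vs Ds where "fact_pattern A us Bs" "fact_pattern A vs Ds"
    "adequate_for us Bs x" "adequate_for vs Ds y"
    using assms by (auto simp: adequate_def)
  then have "fact_pattern A (pattern_append us vs) (Bs @ Ds)"
    and "adequate_for (pattern_append us vs) (Bs @ Ds) (\<lambda>n. x n @ y n)"
    by (simp_all add: fact_pattern_pattern_append adequate_for_def L_pat_append)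
  then show ?thesis
    unfolding adequate_def by blast
qed

lemma adequate_concat:
  "(\<And>i. i < K \<Longrightarrow> adequate A (Z i)) \<Longrightarrow> adequate A (\<lambda>n. concat (map (\<lambda>i. Z i n) [0..<K]))"
proof (induction K)
  case 0
  then show ?case
    using adequate_const[of "[]" A] by simp
next
  case (Suc K)
  then have "adequate A (\<lambda>n. concat (map (\<lambda>i. Z i n) [0..<K]) @ Z K n)"
    by (intro adequate_append) auto
  then show ?case
    by simp
qed

lemma adequate_comp_zero:
  assumes "adequate A x" "strict_mono \<chi>" "\<chi> 0 = 0"
  shows "adequate A (x \<circ> \<chi>)"
proof -
  obtain us Bs where "fact_pattern A us Bs" and x: "\<forall>n. x n \<in> L_pat us Bs n"
    using assms(1) by (auto simp: adequate_def adequate_for_def)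
  have "x (\<chi> n) \<in> L_pat us Bs n" for n
  proof (cases "n = 0")
    case False
    show ?thesis
      by (rule L_pat_antimono[OF spec[OF x] _ strict_mono_imp_increasing[OF assms(2)]])
        (use False in simp)
  qed (use x assms(3) in simp)
  with \<open>fact_pattern A us Bs\<close> show ?thesis
    unfolding adequate_def adequate_for_def comp_def by blast
qed

lemma adequate_if_lang_pow_grows:
  assumes "C \<noteq> {}" "C \<subseteq> A" "set (x 0) \<subseteq> C"
    and grows: "\<And>n. 0 < n \<Longrightarrow> \<exists>N \<ge> (length (x 0) + 1) * (n + 1). x n \<in> lang_pow (exact_alph C) N"
  shows "adequate A x"
proof -
  let ?us = "letters_pattern (x 0)" and ?Bs = "replicate (length (x 0) + 1) C"
  have "x n \<in> L_pat ?us ?Bs n" for n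
  proof (cases "n = 0")
    case True
    have "length ?us = Suc (length ?Bs)"
      by (simp add: letters_pattern_def)
    with True show ?thesis
      by (simp add: L_pat_0 concat_letters_pattern)
  next
    case False
    then obtain N where "(length (x 0) + 1) * (n + 1) \<le> N" "x n \<in> lang_pow (exact_alph C) N"
      using grows by blast
    with False assms(3) show ?thesis
      by (intro mem_L_pat_letters_pattern) simp_all
  qed
  moreover have "fact_pattern A ?us ?Bs"
    using assms(1-3) by (auto simp: fact_pattern_def letters_pattern_def)
  ultimately show ?thesis
    unfolding adequate_def adequate_for_def by blast
qed

section \<open>Block factorizations\<close>

text \<open>\<open>w = z\<^sub>1 a\<^sub>1 \<dots> z\<^sub>m a\<^sub>m r\<close>, where each block \<open>z\<^sub>i a\<^sub>i\<close> has alphabet exactly \<open>C\<close>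
  while \<open>z\<^sub>i\<close> and \<open>r\<close> miss a letter of \<open>C\<close>. Cutting after every letter that completes the alphabet
  yields one.\<close>
definition block_factorization :: "'a set \<Rightarrow> 'a list \<Rightarrow> ('a list \<times> 'a) list \<Rightarrow> 'a list \<Rightarrow> bool" where
  "block_factorization C w bs r \<longleftrightarrow> w = concat (map (\<lambda>(z, a). z @ [a]) bs) @ r
     \<and> (\<forall>(z, a) \<in> set bs. set z \<subset> C \<and> set (z @ [a]) = C) \<and> set r \<subset> C"

lemma ex_block_factorization:
  assumes "C \<noteq> {}" "set w \<subseteq> C"
  shows "\<exists>bs r. block_factorization C w bs r"
  using assms(2)
proof (induction w rule: rev_induct)
  case Nil
  have "block_factorization C [] [] []"
    using assms(1) by (auto simp: block_factorization_def)
  then show ?case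
    by blast
next
  case (snoc a w)
  then obtain bs r where fac: "block_factorization C w bs r"
    by auto
  show ?case
  proof (cases "set (r @ [a]) = C")
    case True
    with fac assms(1) have "block_factorization C (w @ [a]) (bs @ [(r, a)]) []"
      by (auto simp: block_factorization_def)
    then show ?thesis
      by blast
  next
    case False
    with fac snoc.prems have "block_factorization C (w @ [a]) bs (r @ [a])"
      by (auto simp: block_factorization_def)
    then show ?thesis
      by blast
  qed
qed

definition blocks :: "'a list \<Rightarrow> ('a list \<times> 'a) list" where
  "blocks w = fst (SOME p. block_factorization (set w) w (fst p) (snd p))"

definition rest :: "'a list \<Rightarrow> 'a list" where
  "rest w = snd (SOME p. block_factorization (set w) w (fst p) (snd p))"

lemma block_factorization_blocks_rest:
  assumes "w \<noteq> []"
  shows "block_factorization (set w) w (blocks w) (rest w)"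
proof -
  have "set w \<noteq> {}"
    using assms by simp
  then obtain bs r where "block_factorization (set w) w bs r"
    using ex_block_factorization by blast
  then have "block_factorization (set w) w (fst (SOME p. block_factorization (set w) w (fst p) (snd p)))
      (snd (SOME p. block_factorization (set w) w (fst p) (snd p)))"
    by (intro someI[of "\<lambda>p. block_factorization (set w) w (fst p) (snd p)" "(bs, r)"]) simp
  then show ?thesis
    by (simp only: blocks_def rest_def)
qed

lemma blocks_rest_eq: "w \<noteq> [] \<Longrightarrow> w = concat (map (\<lambda>(z, a). z @ [a]) (blocks w)) @ rest w"
  using block_factorization_blocks_rest unfolding block_factorization_def by blast

lemma set_block:
  assumes "w \<noteq> []" "(z, a) \<in> set (blocks w)"
  shows "set z \<subset> set w" "set (z @ [a]) = set w"
proof -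
  have "\<forall>(z, a) \<in> set (blocks w). set z \<subset> set w \<and> set (z @ [a]) = set w"
    using block_factorization_blocks_rest[OF assms(1)] unfolding block_factorization_def by blast
  with assms(2) show "set z \<subset> set w" "set (z @ [a]) = set w"
    by auto
qed

lemma set_map_snd_blocks: "w \<noteq> [] \<Longrightarrow> set (map snd (blocks w)) \<subseteq> set w"
  using set_block(2) by fastforce

lemma set_rest_psubset: "w \<noteq> [] \<Longrightarrow> set (rest w) \<subset> set w"
  using block_factorization_blocks_rest unfolding block_factorization_def by blast

lemma mem_lang_pow_length_blocks:
  assumes "w \<noteq> []" "blocks w \<noteq> []"
  shows "w \<in> lang_pow (exact_alph (set w)) (length (blocks w))"
proof -
  have "\<forall>v\<in>set (map (\<lambda>(z, a). z @ [a]) (blocks w)). set v = set w"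
    using set_block(2)[OF assms(1)] by (auto simp del: set_append)
  moreover have "set (rest w) \<subseteq> set w"
    using set_rest_psubset[OF assms(1)] by auto
  ultimately have "concat (map (\<lambda>(z, a). z @ [a]) (blocks w)) @ rest w
      \<in> lang_pow (exact_alph (set w)) (length (map (\<lambda>(z, a). z @ [a]) (blocks w)))"
    using assms(2) by (intro concat_append_mem_lang_pow_exact_alph) auto
  then show ?thesis
    using blocks_rest_eq[OF assms(1)] by (metis length_map)
qed

lemma adequate_if_blocks_adequate:
  assumes nonempty: "\<And>n. x n \<noteq> []" and letters: "\<And>n. map snd (blocks (x n)) = \<alpha>"
    and "set \<alpha> \<subseteq> A"
    and "\<And>i. i < length \<alpha> \<Longrightarrow> adequate A (\<lambda>n. fst (blocks (x n) ! i))"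
    and "adequate A (\<lambda>n. rest (x n))"
  shows "adequate A x"
proof -
  have len: "length (blocks (x n)) = length \<alpha>" for n
    using letters[of n] length_map by metis
  have "snd (blocks (x n) ! i) = \<alpha> ! i" if "i < length \<alpha>" for n i
    using letters[of n] that len[of n] by (metis nth_map)
  then have blocks_eq: "map (\<lambda>(z, a). z @ [a]) (blocks (x n))
      = map (\<lambda>i. fst (blocks (x n) ! i) @ [\<alpha> ! i]) [0..<length \<alpha>]" for n
    by (intro nth_equalityI) (simp_all add: len case_prod_beta)
  have "x n = concat (map (\<lambda>i. fst (blocks (x n) ! i) @ [\<alpha> ! i]) [0..<length \<alpha>]) @ rest (x n)"
    for n
    using blocks_rest_eq[OF nonempty[of n]] unfolding blocks_eq .
  then have eq: "x = (\<lambda>n. concat (map (\<lambda>i. fst (blocks (x n) ! i) @ [\<alpha> ! i]) [0..<length \<alpha>]) @ rest (x n))"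
    by (rule ext)
  have "adequate A (\<lambda>n. concat (map (\<lambda>i. fst (blocks (x n) ! i) @ [\<alpha> ! i]) [0..<length \<alpha>]) @ rest (x n))"
    using assms(3-5) by (intro adequate_append adequate_concat adequate_const) auto
  then show ?thesis
    by (subst eq)
qed

lemma adequate_if_blocks_grow:
  assumes "x 0 \<noteq> []" "set (x 0) \<subseteq> A" and alph: "\<And>n. set (x n) = set (x 0)"
    and grows: "\<And>n. 0 < n \<Longrightarrow> (length (x 0) + 1) * (n + 1) \<le> length (blocks (x n))"
  shows "adequate A x"
proof (rule adequate_if_lang_pow_grows[of "set (x 0)"])
  fix n :: nat
  assume "0 < n"
  then have "blocks (x n) \<noteq> []"
    using grows[of n] by auto
  moreover have "x n \<noteq> []"
    using alph[of n] assms(1) by auto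
  ultimately have "x n \<in> lang_pow (exact_alph (set (x n))) (length (blocks (x n)))"
    using mem_lang_pow_length_blocks by blast
  then have "x n \<in> lang_pow (exact_alph (set (x 0))) (length (blocks (x n)))"
    using alph[of n] by simp
  with grows[OF \<open>0 < n\<close>]
  show "\<exists>N \<ge> (length (x 0) + 1) * (n + 1). x n \<in> lang_pow (exact_alph (set (x 0))) N"
    by blast
qed (use assms(1,2) in auto)

section \<open>Subsequences\<close>

lemma ex_constant_subseq:
  fixes f :: "nat \<Rightarrow> 'a"
  assumes "finite S" "\<And>n. f n \<in> S"
  shows "\<exists>\<psi> :: nat \<Rightarrow> nat. \<exists>c. strict_mono \<psi> \<and> (\<forall>n. f (\<psi> n) = c)"
proof -
  have "range f \<subseteq> S"
    using assms(2) by blast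
  then have "finite (range f)"
    using assms(1) by (rule finite_subset)
  then obtain i where "infinite {n \<in> UNIV. f n = f i}"
    using pigeonhole_infinite[of "UNIV :: nat set" f] infinite_UNIV_nat by blast
  then obtain \<psi> :: "nat \<Rightarrow> nat" where "strict_mono \<psi>" "\<forall>n. \<psi> n \<in> {n \<in> UNIV. f n = f i}"
    using infinite_enumerate by blast
  then have "strict_mono \<psi>" "\<forall>n. f (\<psi> n) = f i"
    by auto
  then show ?thesis
    by blast
qed

lemma ex_subseq_ge_or_bounded:
  fixes h :: "nat \<Rightarrow> nat"
  shows "\<exists>\<psi>. strict_mono \<psi> \<and> ((\<forall>n. n \<le> h (\<psi> n)) \<or> (\<exists>M. \<forall>n. h (\<psi> n) \<le> M))"
proof (cases "\<exists>M. \<forall>n. h n \<le> M")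
  case True
  then show ?thesis
    by (intro exI[of _ "\<lambda>n. n"]) (simp add: strict_mono_def)
next
  case False
  have step: "\<exists>m'. Suc n \<le> h m' \<and> m < m'" for n m
  proof -
    from False obtain m' where "\<not> h m' \<le> max (Suc n) (Max (h ` {..m}))"
      by blast
    then have "Suc n < h m'" "Max (h ` {..m}) < h m'"
      by (simp_all only: not_le max_less_iff_conj)
    moreover have "m < m'"
    proof (rule ccontr)
      assume "\<not> m < m'"
      then have "h m' \<le> Max (h ` {..m})"
        by (intro Max_ge) auto
      with \<open>Max (h ` {..m}) < h m'\<close> show False
        by linarith
    qed
    ultimately show ?thesis
      by (intro exI[of _ m']) simp
  qed
  have "\<exists>\<psi>. \<forall>n. n \<le> h (\<psi> n) \<and> \<psi> n < \<psi> (Suc n)"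
    using dependent_nat_choice[of "\<lambda>n m. n \<le> h m" "\<lambda>n m m'. m < m'"] step by simp
  then show ?thesis
    using strict_mono_Suc_iff by blast
qed

lemma ex_subseq_zero_dominating:
  fixes B :: "nat \<Rightarrow> nat"
  shows "\<exists>\<chi>. strict_mono \<chi> \<and> \<chi> 0 = 0 \<and> (\<forall>n>0. B n \<le> \<chi> n)"
proof -
  define \<chi> where "\<chi> n = (\<Sum>i\<in>{1..n}. Suc (B i))" for n
  have "strict_mono \<chi>"
    unfolding strict_mono_Suc_iff \<chi>_def by simp
  moreover have "B n \<le> \<chi> n" if "n > 0" for n
  proof -
    have "B n \<le> Suc (B n)"
      by simp
    also have "\<dots> \<le> \<chi> n"
      unfolding \<chi>_def using that by (intro member_le_sum) auto
    finally show ?thesis .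
  qed
  ultimately show ?thesis
    by (auto simp: \<chi>_def)
qed

lemma ex_common_subseq:
  fixes F :: "(nat \<Rightarrow> 'a) set" and P :: "(nat \<Rightarrow> 'a) \<Rightarrow> bool"
  assumes "finite F"
    and ex: "\<And>x (\<phi> :: nat \<Rightarrow> nat). x \<in> F \<Longrightarrow> strict_mono \<phi> \<Longrightarrow> \<exists>\<psi>. strict_mono \<psi> \<and> P (x \<circ> \<phi> \<circ> \<psi>)"
    and closed: "\<And>y \<psi>. P y \<Longrightarrow> strict_mono \<psi> \<Longrightarrow> P (y \<circ> \<psi>)"
  shows "\<exists>\<phi>. strict_mono \<phi> \<and> (\<forall>x\<in>F. P (x \<circ> \<phi>))"
  using assms(1) ex
proof (induction F rule: finite_induct)
  case empty
  show ?case
    by (intro exI[of _ "\<lambda>n. n"]) (simp add: strict_mono_def)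
next
  case (insert x F)
  have "\<exists>\<phi>. strict_mono \<phi> \<and> (\<forall>y\<in>F. P (y \<circ> \<phi>))"
    by (intro insert.IH insert.prems) auto
  then obtain \<phi> :: "nat \<Rightarrow> nat" where "strict_mono \<phi>" "\<forall>y\<in>F. P (y \<circ> \<phi>)"
    by blast
  moreover obtain \<psi> :: "nat \<Rightarrow> nat" where "strict_mono \<psi>" "P (x \<circ> \<phi> \<circ> \<psi>)"
    using insert.prems[of x \<phi>] \<open>strict_mono \<phi>\<close> by blast
  ultimately have "P (y \<circ> \<phi> \<circ> \<psi>)" if "y \<in> insert x F" for y
    using that closed by blast
  then have "\<forall>y\<in>insert x F. P (y \<circ> (\<phi> \<circ> \<psi>))"
    by (simp add: comp_assoc)
  with \<open>strict_mono \<phi>\<close> \<open>strict_mono \<psi>\<close> show ?case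
    using strict_mono_o by blast
qed

definition block_stable :: "nat \<Rightarrow> (nat \<Rightarrow> 'a list) \<Rightarrow> bool" where
  "block_stable k x \<longleftrightarrow> (\<forall>n. set (x n) = set (x 0))
     \<and> (card (set (x 0)) = Suc k \<longrightarrow>
          (\<forall>n. n \<le> length (blocks (x n))) \<or> (\<exists>\<alpha>. \<forall>n. map snd (blocks (x n)) = \<alpha>))"

lemma block_stable_comp:
  assumes "block_stable k x" "strict_mono \<psi>"
  shows "block_stable k (x \<circ> \<psi>)"
proof -
  have alph: "set (x (\<psi> n)) = set (x 0)" for n
    using assms(1) by (simp add: block_stable_def)
  have "(\<forall>n. n \<le> length (blocks (x (\<psi> n)))) \<or> (\<exists>\<alpha>. \<forall>n. map snd (blocks (x (\<psi> n))) = \<alpha>)"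
    if "card (set (x 0)) = Suc k"
  proof -
    from assms(1) that
    consider "\<forall>n. n \<le> length (blocks (x n))" | "\<exists>\<alpha>. \<forall>n. map snd (blocks (x n)) = \<alpha>"
      unfolding block_stable_def by blast
    then show ?thesis
    proof cases
      case 1
      then have "n \<le> length (blocks (x (\<psi> n)))" for n
        using strict_mono_imp_increasing[OF assms(2), of n] le_trans by blast
      then show ?thesis
        by blast
    qed auto
  qed
  then show ?thesis
    by (simp add: block_stable_def alph)
qed

lemma ex_subseq_blocks_grow_or_periodic:
  fixes x :: "nat \<Rightarrow> 'a list"
  assumes "finite A" "\<And>n. set (x n) \<subseteq> A" "\<And>n. x n \<noteq> []"
  shows "\<exists>\<psi>. strict_mono \<psi> \<and>
    ((\<forall>n. n \<le> length (blocks (x (\<psi> n)))) \<or> (\<exists>\<alpha>. \<forall>n. map snd (blocks (x (\<psi> n))) = \<alpha>))"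
proof -
  obtain \<psi> :: "nat \<Rightarrow> nat" where "strict_mono \<psi>" and \<psi>: "(\<forall>n. n \<le> length (blocks (x (\<psi> n))))
      \<or> (\<exists>M. \<forall>n. length (blocks (x (\<psi> n))) \<le> M)"
    using ex_subseq_ge_or_bounded[of "\<lambda>n. length (blocks (x n))"] by blast
  then consider "\<forall>n. n \<le> length (blocks (x (\<psi> n)))"
    | M where "\<forall>n. length (blocks (x (\<psi> n))) \<le> M"
    by blast
  then show ?thesis
  proof cases
    case 1
    with \<open>strict_mono \<psi>\<close> show ?thesis
      by blast
  next
    case 2
    have letters_bounded: "map snd (blocks (x (\<psi> n))) \<in> {as. set as \<subseteq> A \<and> length as \<le> M}" for n
      using 2 set_map_snd_blocks[OF assms(3)] assms(2)[of "\<psi> n"] by auto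
    from ex_constant_subseq[where f = "\<lambda>n. map snd (blocks (x (\<psi> n)))",
        OF finite_lists_length_le[OF assms(1)] letters_bounded]
    obtain \<psi>' :: "nat \<Rightarrow> nat" and \<alpha> where "strict_mono \<psi>'" "\<forall>n. map snd (blocks (x (\<psi> (\<psi>' n)))) = \<alpha>"
      by blast
    with \<open>strict_mono \<psi>\<close> show ?thesis
      by (intro exI[of _ "\<psi> \<circ> \<psi>'"]) (auto intro: strict_mono_o)
  qed
qed

lemma ex_block_stable_subseq:
  fixes x :: "nat \<Rightarrow> 'a list"
  assumes "finite A" "\<And>n. set (x n) \<subseteq> A"
  shows "\<exists>\<psi>. strict_mono \<psi> \<and> block_stable k (x \<circ> \<psi>)"
proof -
  obtain \<psi> :: "nat \<Rightarrow> nat" and C where \<psi>: "strict_mono \<psi>" "\<forall>n. set (x (\<psi> n)) = C"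
    using ex_constant_subseq[of "Pow A" "\<lambda>n. set (x n)"] assms by auto
  show ?thesis
  proof (cases "card C = Suc k")
    case False
    with \<psi> show ?thesis
      by (intro exI[of _ \<psi>]) (simp add: block_stable_def)
  next
    case True
    then have "x (\<psi> n) \<noteq> []" for n
      using \<psi>(2) by (metis card.empty nat.distinct(1) set_empty)
    then obtain \<psi>' :: "nat \<Rightarrow> nat" where "strict_mono \<psi>'"
      "(\<forall>n. n \<le> length (blocks (x (\<psi> (\<psi>' n))))) \<or> (\<exists>\<alpha>. \<forall>n. map snd (blocks (x (\<psi> (\<psi>' n)))) = \<alpha>)"
      using ex_subseq_blocks_grow_or_periodic[OF assms(1), of "x \<circ> \<psi>"] assms(2) by auto
    with \<psi> show ?thesis
      by (intro exI[of _ "\<psi> \<circ> \<psi>'"]) (auto simp: block_stable_def intro: strict_mono_o)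
  qed
qed

section \<open>Adequate subsequences\<close>

definition block_pieces :: "(nat \<Rightarrow> 'a list) \<Rightarrow> (nat \<Rightarrow> 'a list) set" where
  "block_pieces x = (\<lambda>i n. fst (blocks (x n) ! i)) ` {..<length (blocks (x 0))} \<union> {\<lambda>n. rest (x n)}"

lemma finite_block_pieces: "finite (block_pieces x)"
  by (simp add: block_pieces_def)

lemma set_block_pieces_psubset:
  assumes "\<And>n. x n \<noteq> []" "\<And>n. length (blocks (x n)) = length (blocks (x 0))" "y \<in> block_pieces x"
  shows "set (y n) \<subset> set (x n)"
  using assms(3) unfolding block_pieces_def
proof
  assume "y \<in> (\<lambda>i n. fst (blocks (x n) ! i)) ` {..<length (blocks (x 0))}"
  then obtain i where "i < length (blocks (x 0))" "y = (\<lambda>n. fst (blocks (x n) ! i))"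
    by blast
  moreover from this(1) have "i < length (blocks (x n))"
    using assms(2)[of n] by linarith
  ultimately show ?thesis
    using set_block(1)[OF assms(1)[of n], of "fst (blocks (x n) ! i)" "snd (blocks (x n) ! i)"]
    by simp
qed (use set_rest_psubset[OF assms(1)[of n]] in simp)

lemma adequate_comp_if_block_pieces_adequate:
  assumes nonempty: "\<And>n. x n \<noteq> []" and letters: "\<forall>n. map snd (blocks (x n)) = \<alpha>"
    and "set (x 0) \<subseteq> A" and pieces: "\<forall>y\<in>block_pieces x. adequate A (y \<circ> \<phi>)"
  shows "adequate A (x \<circ> \<phi>)"
proof (rule adequate_if_blocks_adequate[where \<alpha> = \<alpha>])
  show "set \<alpha> \<subseteq> A"
    using letters set_map_snd_blocks[OF nonempty, of 0] assms(3) by auto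
  fix i
  assume "i < length \<alpha>"
  then have "i < length (blocks (x 0))"
    using letters by (metis length_map)
  then have "(\<lambda>n. fst (blocks (x n) ! i)) \<in> block_pieces x"
    unfolding block_pieces_def by (intro UnI1 image_eqI[where x = i]) simp_all
  with pieces have "adequate A ((\<lambda>n. fst (blocks (x n) ! i)) \<circ> \<phi>)"
    by blast
  then show "adequate A (\<lambda>n. fst (blocks ((x \<circ> \<phi>) n) ! i))"
    by (simp add: comp_def)
next
  have "(\<lambda>n. rest (x n)) \<in> block_pieces x"
    by (simp add: block_pieces_def)
  with pieces have "adequate A ((\<lambda>n. rest (x n)) \<circ> \<phi>)"
    by blast
  then show "adequate A (\<lambda>n. rest ((x \<circ> \<phi>) n))"
    by (simp add: comp_def)
qed (use letters nonempty in auto)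

text \<open>A sequence with a growing block count is adequate without help from smaller sequences
  (\<open>adequate_if_blocks_grow\<close>).\<close>
definition smaller_pieces :: "nat \<Rightarrow> (nat \<Rightarrow> 'a list) \<Rightarrow> (nat \<Rightarrow> 'a list) set" where
  "smaller_pieces k x =
    (if card (set (x 0)) \<noteq> Suc k then {x}
     else if \<forall>n. n \<le> length (blocks (x n)) then {} else block_pieces x)"

lemma finite_smaller_pieces: "finite (smaller_pieces k x)"
  by (simp add: smaller_pieces_def finite_block_pieces)

lemma smaller_pieces_bound:
  assumes stable: "block_stable k x" and bound: "\<And>n. set (x n) \<subseteq> A \<and> card (set (x n)) \<le> Suc k"
    and "y \<in> smaller_pieces k x"
  shows "set (y n) \<subseteq> A \<and> card (set (y n)) \<le> k"
proof -
  have alph: "set (x m) = set (x 0)" for m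
    using stable by (simp add: block_stable_def)
  show ?thesis
  proof (cases "card (set (x 0)) = Suc k")
    case False
    with assms(3) bound[of n] alph[of n] show ?thesis
      by (simp add: smaller_pieces_def)
  next
    case True
    then have nonempty: "x m \<noteq> []" for m
      using alph[of m] by auto
    from True assms(3) have "y \<in> block_pieces x" "\<not> (\<forall>m. m \<le> length (blocks (x m)))"
      unfolding smaller_pieces_def by (auto split: if_splits)
    with True stable obtain \<alpha> where "\<forall>m. map snd (blocks (x m)) = \<alpha>"
      unfolding block_stable_def by blast
    then have "length (blocks (x m)) = length (blocks (x 0))" for m
      by (metis length_map)
    then have "set (y n) \<subset> set (x n)"
      by (rule set_block_pieces_psubset[OF nonempty _ \<open>y \<in> block_pieces x\<close>])
    with True bound[of n] alph[of n] show ?thesis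
      using psubset_card_mono[of "set (x n)" "set (y n)"] by auto
  qed
qed

lemma adequate_comp_if_smaller_pieces_adequate:
  assumes stable: "block_stable k x" and "\<And>n. set (x n) \<subseteq> A"
    and pieces: "\<forall>y\<in>smaller_pieces k x. adequate A (y \<circ> \<phi>)"
    and dominating: "\<And>n. 0 < n \<Longrightarrow> (length (x (\<phi> 0)) + 1) * (n + 1) \<le> \<phi> n"
  shows "adequate A (x \<circ> \<phi>)"
proof -
  have alph: "set (x n) = set (x 0)" for n
    using stable by (simp add: block_stable_def)
  consider (small) "card (set (x 0)) \<noteq> Suc k"
    | (growing) "card (set (x 0)) = Suc k" "\<forall>n. n \<le> length (blocks (x n))"
    | (periodic) \<alpha> where "card (set (x 0)) = Suc k" "\<not> (\<forall>n. n \<le> length (blocks (x n)))"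
      "\<forall>n. map snd (blocks (x n)) = \<alpha>"
    using stable unfolding block_stable_def by blast
  then show ?thesis
  proof cases
    case small
    with pieces show ?thesis
      by (simp add: smaller_pieces_def)
  next
    case growing
    then have "x n \<noteq> []" for n
      using alph[of n] by auto
    moreover have "(length (x (\<phi> 0)) + 1) * (n + 1) \<le> length (blocks (x (\<phi> n)))" if "0 < n" for n
      using dominating[OF that] growing(2) le_trans by blast
    ultimately show ?thesis
    proof (intro adequate_if_blocks_grow)
      fix n
      show "set ((x \<circ> \<phi>) n) = set ((x \<circ> \<phi>) 0)"
        using alph[of "\<phi> n"] alph[of "\<phi> 0"] by simp
    qed (use assms(2) in auto)
  next
    case periodic
    then have "x n \<noteq> []" for n
      using alph[of n] by auto
    with periodic pieces assms(2) show ?thesis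
      by (intro adequate_comp_if_block_pieces_adequate) (auto simp: smaller_pieces_def)
  qed
qed

lemma adequate_subseq_if_block_stable:
  fixes F :: "(nat \<Rightarrow> 'a list) set"
  assumes IH: "\<And>G :: (nat \<Rightarrow> 'a list) set. finite G \<Longrightarrow> \<forall>y\<in>G. \<forall>n. set (y n) \<subseteq> A \<and> card (set (y n)) \<le> k
      \<Longrightarrow> \<exists>\<psi>. strict_mono \<psi> \<and> (\<forall>y\<in>G. adequate A (y \<circ> \<psi>))"
    and "finite F" and bound: "\<And>x n. x \<in> F \<Longrightarrow> set (x n) \<subseteq> A \<and> card (set (x n)) \<le> Suc k"
    and stable: "\<And>x. x \<in> F \<Longrightarrow> block_stable k x"
  shows "\<exists>\<phi>. strict_mono \<phi> \<and> (\<forall>x\<in>F. adequate A (x \<circ> \<phi>))"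
proof -
  have "finite (\<Union>(smaller_pieces k ` F))"
    using \<open>finite F\<close> by (simp add: finite_smaller_pieces)
  moreover have "\<forall>y\<in>\<Union>(smaller_pieces k ` F). \<forall>n. set (y n) \<subseteq> A \<and> card (set (y n)) \<le> k"
  proof (intro ballI allI)
    fix y n
    assume "y \<in> \<Union>(smaller_pieces k ` F)"
    then obtain x where x: "x \<in> F" and y: "y \<in> smaller_pieces k x"
      by blast
    show "set (y n) \<subseteq> A \<and> card (set (y n)) \<le> k"
      using smaller_pieces_bound[OF stable[OF x] bound[OF x] y] .
  qed
  ultimately obtain \<psi> :: "nat \<Rightarrow> nat" where \<psi>: "strict_mono \<psi>"
    "\<forall>y\<in>\<Union>(smaller_pieces k ` F). adequate A (y \<circ> \<psi>)"
    by (blast dest: IH)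
  \<comment> \<open>\<open>\<chi> 0 = 0\<close> keeps the pieces adequate, and fixing \<open>\<psi> 0\<close> first lets \<open>\<chi>\<close> outgrow the patterns
    built from the first words of the growing sequences\<close>
  obtain \<chi> :: "nat \<Rightarrow> nat" where \<chi>: "strict_mono \<chi>" "\<chi> 0 = 0"
    "\<forall>n>0. (\<Sum>x\<in>F. (length (x (\<psi> 0)) + 1) * (n + 1)) \<le> \<chi> n"
    using ex_subseq_zero_dominating[of "\<lambda>n. \<Sum>x\<in>F. (length (x (\<psi> 0)) + 1) * (n + 1)"] by blast
  have "adequate A (x \<circ> (\<psi> \<circ> \<chi>))" if "x \<in> F" for x
  proof (rule adequate_comp_if_smaller_pieces_adequate[where k = k])
    show "\<forall>y\<in>smaller_pieces k x. adequate A (y \<circ> (\<psi> \<circ> \<chi>))"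
      using adequate_comp_zero[OF _ \<chi>(1,2)] \<psi>(2) that by (fastforce simp: comp_assoc)
    fix n :: nat
    assume "0 < n"
    have "(length (x (\<psi> 0)) + 1) * (n + 1) \<le> (\<Sum>x\<in>F. (length (x (\<psi> 0)) + 1) * (n + 1))"
      using \<open>finite F\<close> that by (intro member_le_sum) auto
    also have "\<dots> \<le> \<chi> n"
      using \<chi>(3) \<open>0 < n\<close> by blast
    also have "\<dots> \<le> \<psi> (\<chi> n)"
      using strict_mono_imp_increasing[OF \<psi>(1)] .
    finally show "(length (x ((\<psi> \<circ> \<chi>) 0)) + 1) * (n + 1) \<le> (\<psi> \<circ> \<chi>) n"
      using \<chi>(2) by simp
  qed (use that stable bound in auto)
  then show ?thesis
    using strict_mono_o[OF \<psi>(1) \<chi>(1)] by blast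
qed

lemma adequate_subseq_family_Suc:
  fixes F :: "(nat \<Rightarrow> 'a list) set"
  assumes IH: "\<And>G :: (nat \<Rightarrow> 'a list) set. finite G \<Longrightarrow> \<forall>y\<in>G. \<forall>n. set (y n) \<subseteq> A \<and> card (set (y n)) \<le> k
      \<Longrightarrow> \<exists>\<psi>. strict_mono \<psi> \<and> (\<forall>y\<in>G. adequate A (y \<circ> \<psi>))"
    and "finite A" "finite F" and bound: "\<forall>x\<in>F. \<forall>n. set (x n) \<subseteq> A \<and> card (set (x n)) \<le> Suc k"
  shows "\<exists>\<phi>. strict_mono \<phi> \<and> (\<forall>x\<in>F. adequate A (x \<circ> \<phi>))"
proof -
  have "\<exists>\<phi>. strict_mono \<phi> \<and> (\<forall>x\<in>F. block_stable k (x \<circ> \<phi>))"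
  proof (rule ex_common_subseq[OF \<open>finite F\<close>])
    fix x and \<phi> :: "nat \<Rightarrow> nat"
    assume "x \<in> F"
    then show "\<exists>\<psi>. strict_mono \<psi> \<and> block_stable k (x \<circ> \<phi> \<circ> \<psi>)"
      using ex_block_stable_subseq[OF \<open>finite A\<close>, of "x \<circ> \<phi>"] bound by auto
  qed (rule block_stable_comp)
  then obtain \<phi> :: "nat \<Rightarrow> nat" where \<phi>: "strict_mono \<phi>" "\<forall>x\<in>F. block_stable k (x \<circ> \<phi>)"
    by blast
  have "\<exists>\<psi>. strict_mono \<psi> \<and> (\<forall>y\<in>(\<lambda>x. x \<circ> \<phi>) ` F. adequate A (y \<circ> \<psi>))"
  proof (rule adequate_subseq_if_block_stable[OF IH])
    show "finite ((\<lambda>x. x \<circ> \<phi>) ` F)"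
      using \<open>finite F\<close> by simp
  next
    fix y n
    assume "y \<in> (\<lambda>x. x \<circ> \<phi>) ` F"
    then obtain x where "x \<in> F" "y = x \<circ> \<phi>"
      by blast
    then show "set (y n) \<subseteq> A \<and> card (set (y n)) \<le> Suc k"
      using bound by simp
  next
    fix y
    assume "y \<in> (\<lambda>x. x \<circ> \<phi>) ` F"
    then show "block_stable k y"
      using \<phi>(2) by auto
  qed
  then obtain \<psi> :: "nat \<Rightarrow> nat" where "strict_mono \<psi>" "\<forall>x\<in>F. adequate A (x \<circ> (\<phi> \<circ> \<psi>))"
    by (auto simp: comp_assoc)
  with \<phi>(1) show ?thesis
    using strict_mono_o by blast
qed

lemma adequate_subseq_family:
  fixes F :: "(nat \<Rightarrow> 'a list) set"
  assumes "finite A" "finite F" "\<forall>x\<in>F. \<forall>n. set (x n) \<subseteq> A \<and> card (set (x n)) \<le> k"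
  shows "\<exists>\<phi>. strict_mono \<phi> \<and> (\<forall>x\<in>F. adequate A (x \<circ> \<phi>))"
  using assms(2,3)
proof (induction k arbitrary: F)
  case 0
  have "x = (\<lambda>n. [])" if "x \<in> F" for x
    using 0 that by (fastforce simp: card_eq_0_iff)
  then have "\<forall>x\<in>F. adequate A (x \<circ> (\<lambda>n. n))"
    using adequate_const[of "[]" A] by (auto simp: comp_def)
  moreover have "strict_mono (\<lambda>n :: nat. n)"
    by (simp add: strict_mono_def)
  ultimately show ?case
    by blast
next
  case (Suc k)
  show ?case
    by (rule adequate_subseq_family_Suc[OF Suc.IH assms(1) Suc.prems])
qed

theorem lemma3:
  fixes A :: "'a set" and w :: "nat \<Rightarrow> 'a list"
  assumes "finite A"
    and "\<And>n. set (w n) \<subseteq> A"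
  shows "\<exists>\<phi>. strict_mono \<phi> \<and> adequate A (w \<circ> \<phi>)"
proof -
  have "\<forall>x\<in>{w}. \<forall>n. set (x n) \<subseteq> A \<and> card (set (x n)) \<le> card A"
    using assms card_mono by blast
  then show ?thesis
    using adequate_subseq_family[of A "{w}" "card A"] assms(1) by simp
qed

end
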